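(* Let $E$ be an Anderson $t$-module of dimension $d$ over $\mathscr O_L$ and $P\in A$ a monic irreducible polynomial. For all $a\in A\setminus\{0\}$ and all $x\in\mathbb T_z(L_P)^d\setminus\{0\}$, we have $\widetilde E_a(x)\ne0$.
   Context: $\mathbb F_q$ finite field, $A=\mathbb F_q[\theta]$, $K=\mathbb F_q(\theta)$, $L/K$ finite, $\mathscr O_L$ integral closure of $A$ in $L$, $\tau$ the $q$-Frobenius. An Anderson $t$-module of dimension $d$ over $\mathscr O_L$ is an $\mathbb F_q$-algebra homomorphism $E:A\to M_d(\mathscr O_L)\{\tau\}$, $E_a=\sum_iE_{a,i}\tau^i$, with $(E_{a,0}-aI_d)^d=0$ and $\deg_\tau E_\theta>0$. With $z$ an indeterminate fixed by $\tau$, the $z$-twist is $\widetilde E_a=\sum_iE_{a,i}z^i\tau^i$, acting on $d$-tuples. $K_P$ is the $P$-adic completion of $K$, $\mathbb T_z(K_P)$ the Tate algebra in $z$ over $K_P$, and $\mathbb T_z(L_P)=L\otimes_K\mathbb T_z(K_P)$, on which $\tau$ acts by $q$-th powers on $L\otimes K_P$-coefficients and trivially on $z$. *)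

theory Defs
  imports "HOL-Computational_Algebra.Polynomial" "HOL-Computational_Algebra.Fraction_Field" "HOL-Library.Cardinality"
begin

(* A = Fq[theta] is  'a poly  with  'a :: {finite, field},  K = Fq(theta) is  'a poly fract. *)

definition embA :: "'a::field poly \<Rightarrow> 'a poly fract" where
  "embA a = Fract a 1"

definition theta :: "'a::field poly" where
  "theta = [:0, 1:]"

definition vP :: "'a::field poly \<Rightarrow> 'a poly fract \<Rightarrow> int" where
  "vP P x = (THE m. \<exists>u w. w \<noteq> 0 \<and> \<not> P dvd u \<and> \<not> P dvd w \<and>
                         x = (Fract P 1) powi m * Fract u w)"

definition ring_hom_fun :: "('r::ring_1 \<Rightarrow> 's::ring_1) \<Rightarrow> bool" where
  "ring_hom_fun f \<longleftrightarrow> f 1 = 1 \<and> (\<forall>x y. f (x + y) = f x + f y) \<and> (\<forall>x y. f (x * y) = f x * f y)"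

(* "small N y":  y = 0 or w(y) >= N, for a valuation w (w 0 is irrelevant, as if w 0 = infinity) *)
definition small :: "('k \<Rightarrow> int) \<Rightarrow> int \<Rightarrow> 'k::zero \<Rightarrow> bool" where
  "small w N y \<longleftrightarrow> y = 0 \<or> N \<le> w y"

(* (KP, iota, w) is the P-adic completion of K: a complete discretely valued field extending
   (K, v_P) in which K is dense. This determines KP up to unique isomorphism. *)
definition is_P_adic_completion ::
  "'a::field poly \<Rightarrow> ('a poly fract \<Rightarrow> 'kp::field) \<Rightarrow> ('kp \<Rightarrow> int) \<Rightarrow> bool" where
  "is_P_adic_completion P \<iota> w \<longleftrightarrow>
     ring_hom_fun \<iota> \<and>
     (\<forall>x y. x \<noteq> 0 \<longrightarrow> y \<noteq> 0 \<longrightarrow> w (x * y) = w x + w y) \<and>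
     (\<forall>x y. x \<noteq> 0 \<longrightarrow> y \<noteq> 0 \<longrightarrow> x + y \<noteq> 0 \<longrightarrow> min (w x) (w y) \<le> w (x + y)) \<and>
     (\<forall>x. x \<noteq> 0 \<longrightarrow> w (\<iota> x) = vP P x) \<and>
     (\<forall>y N. \<exists>x. small w N (y - \<iota> x)) \<and>
     (\<forall>s :: nat \<Rightarrow> 'kp. (\<forall>N. \<exists>M. \<forall>m n. M \<le> m \<longrightarrow> M \<le> n \<longrightarrow> small w N (s m - s n)) \<longrightarrow>
        (\<exists>l. \<forall>N. \<exists>M. \<forall>m. M \<le> m \<longrightarrow> small w N (s m - l)))"

definition is_basis :: "('a::field poly fract \<Rightarrow> 'l::field) \<Rightarrow> (nat \<Rightarrow> 'l) \<Rightarrow> nat \<Rightarrow> bool" where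
  "is_basis \<sigma> b n \<longleftrightarrow>
     (\<forall>l. \<exists>c. l = (\<Sum>j<n. \<sigma> (c j) * b j)) \<and>
     (\<forall>c. (\<Sum>j<n. \<sigma> (c j) * b j) = 0 \<longrightarrow> (\<forall>j<n. c j = 0))"

definition coord :: "('a::field poly fract \<Rightarrow> 'l::field) \<Rightarrow> (nat \<Rightarrow> 'l) \<Rightarrow> nat \<Rightarrow> 'l \<Rightarrow> nat \<Rightarrow> 'a poly fract" where
  "coord \<sigma> b n l = (SOME c. l = (\<Sum>j<n. \<sigma> (c j) * b j))"

definition integral_over_A :: "('a::field poly fract \<Rightarrow> 'l::field) \<Rightarrow> 'l \<Rightarrow> bool" where
  "integral_over_A \<sigma> l \<longleftrightarrow> (\<exists>p :: 'a poly poly. lead_coeff p = 1 \<and>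
      (\<Sum>i\<le>degree p. \<sigma> (embA (coeff p i)) * l ^ i) = 0)"

(* Twisted polynomials in M_d(L){tau}: f i r c is the (r,c) entry of the coefficient of tau^i *)
type_synonym 'l twpoly = "nat \<Rightarrow> nat \<Rightarrow> nat \<Rightarrow> 'l"

definition tw_wf :: "('a::field poly fract \<Rightarrow> 'l::field) \<Rightarrow> nat \<Rightarrow> 'l twpoly \<Rightarrow> bool" where
  "tw_wf \<sigma> d f \<longleftrightarrow> finite {i. f i \<noteq> (\<lambda>_ _. 0)} \<and>
     (\<forall>i r c. (d \<le> r \<or> d \<le> c) \<longrightarrow> f i r c = 0) \<and>
     (\<forall>i r c. integral_over_A \<sigma> (f i r c))"

definition tw_add :: "'l::field twpoly \<Rightarrow> 'l twpoly \<Rightarrow> 'l twpoly" where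
  "tw_add f g = (\<lambda>i r c. f i r c + g i r c)"

(* (sum_i F_i tau^i)(sum_j G_j tau^j) = sum_{i,j} F_i G_j^{(q^i)} tau^{i+j} *)
definition tw_mul :: "nat \<Rightarrow> nat \<Rightarrow> 'l::field twpoly \<Rightarrow> 'l twpoly \<Rightarrow> 'l twpoly" where
  "tw_mul q d f g = (\<lambda>k r c. \<Sum>i\<le>k. \<Sum>m<d. f i r m * (g (k - i) m c) ^ (q ^ i))"

definition tw_one :: "nat \<Rightarrow> 'l::field twpoly" where
  "tw_one d = (\<lambda>i r c. if i = 0 \<and> r = c \<and> r < d then 1 else 0)"

definition mat_mul :: "nat \<Rightarrow> (nat \<Rightarrow> nat \<Rightarrow> 'l::field) \<Rightarrow> (nat \<Rightarrow> nat \<Rightarrow> 'l) \<Rightarrow> (nat \<Rightarrow> nat \<Rightarrow> 'l)" where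
  "mat_mul d M N = (\<lambda>r c. \<Sum>m<d. M r m * N m c)"

definition mat_pow :: "nat \<Rightarrow> (nat \<Rightarrow> nat \<Rightarrow> 'l::field) \<Rightarrow> nat \<Rightarrow> (nat \<Rightarrow> nat \<Rightarrow> 'l)" where
  "mat_pow d M k = ((mat_mul d M) ^^ k) (\<lambda>r c. if r = c \<and> r < d then 1 else 0)"

definition anderson_t_module ::
  "('a::{finite,field} poly fract \<Rightarrow> 'l::field) \<Rightarrow> nat \<Rightarrow> ('a poly \<Rightarrow> 'l twpoly) \<Rightarrow> bool" where
  "anderson_t_module \<sigma> d E \<longleftrightarrow>
     (\<forall>a. tw_wf \<sigma> d (E a)) \<and>
     (\<forall>a b. E (a + b) = tw_add (E a) (E b)) \<and>
     (\<forall>a b. E (a * b) = tw_mul CARD('a) d (E a) (E b)) \<and>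
     E 1 = tw_one d \<and>
     (\<forall>c a. E (smult c a) = (\<lambda>i r m. \<sigma> (embA [:c:]) * E a i r m)) \<and>
     (\<forall>a. mat_pow d (\<lambda>r c. E a 0 r c - (if r = c \<and> r < d then \<sigma> (embA a) else 0)) d
            = (\<lambda>_ _. 0)) \<and>
     (\<exists>i>0. E theta i \<noteq> (\<lambda>_ _. 0))"

(* Elements of  L (x)_K T_z(K_P)  are represented via the basis b of L/K:
   Y n k = coefficient of z^n on the basis vector b_k (in K_P), i.e.
   Y = sum_k b_k (x) (sum_n Y n k z^n).
   Elements of T_z(L_P)^d:  X r n k  for the r-th component. *)
definition in_Tate_LP :: "('kp::field \<Rightarrow> int) \<Rightarrow> nat \<Rightarrow> nat \<Rightarrow> (nat \<Rightarrow> nat \<Rightarrow> nat \<Rightarrow> 'kp) \<Rightarrow> bool" where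
  "in_Tate_LP w d nb X \<longleftrightarrow> (\<forall>r<d. \<forall>k<nb. \<forall>N. \<exists>M. \<forall>n. M \<le> n \<longrightarrow> small w N (X r n k))"

(* tau on L (x)_K T_z(K_P):  b_j (x) f  |->  b_j^q (x) f^{(1)}, with f^{(1)} coefficientwise q-th power *)
definition tau_LT :: "nat \<Rightarrow> ('a::field poly fract \<Rightarrow> 'l::field) \<Rightarrow> ('a poly fract \<Rightarrow> 'kp::field) \<Rightarrow>
    (nat \<Rightarrow> 'l) \<Rightarrow> nat \<Rightarrow> (nat \<Rightarrow> nat \<Rightarrow> 'kp) \<Rightarrow> (nat \<Rightarrow> nat \<Rightarrow> 'kp)" where
  "tau_LT q \<sigma> \<iota> b nb Y = (\<lambda>n k. \<Sum>j<nb. \<iota> (coord \<sigma> b nb (b j ^ q) k) * (Y n j) ^ q)"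

(* multiplication by l in L:  l * (b_j (x) f) = (l b_j) (x) f *)
definition Lmul_LT :: "('a::field poly fract \<Rightarrow> 'l::field) \<Rightarrow> ('a poly fract \<Rightarrow> 'kp::field) \<Rightarrow>
    (nat \<Rightarrow> 'l) \<Rightarrow> nat \<Rightarrow> 'l \<Rightarrow> (nat \<Rightarrow> nat \<Rightarrow> 'kp) \<Rightarrow> (nat \<Rightarrow> nat \<Rightarrow> 'kp)" where
  "Lmul_LT \<sigma> \<iota> b nb l Y = (\<lambda>n k. \<Sum>j<nb. \<iota> (coord \<sigma> b nb (l * b j) k) * Y n j)"

definition zshift :: "nat \<Rightarrow> (nat \<Rightarrow> nat \<Rightarrow> 'kp::field) \<Rightarrow> (nat \<Rightarrow> nat \<Rightarrow> 'kp)" where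
  "zshift i Y = (\<lambda>n k. if i \<le> n then Y (n - i) k else 0)"

(* z-twist  E~_a(x) = sum_i E_{a,i} z^i tau^i(x)  on T_z(L_P)^d
   (terms with i > n do not contribute to the coefficient of z^n) *)
definition ztwist :: "nat \<Rightarrow> ('a::field poly fract \<Rightarrow> 'l::field) \<Rightarrow> ('a poly fract \<Rightarrow> 'kp::field) \<Rightarrow>
    (nat \<Rightarrow> 'l) \<Rightarrow> nat \<Rightarrow> nat \<Rightarrow> 'l twpoly \<Rightarrow> (nat \<Rightarrow> nat \<Rightarrow> nat \<Rightarrow> 'kp) \<Rightarrow> (nat \<Rightarrow> nat \<Rightarrow> nat \<Rightarrow> 'kp)" where
  "ztwist q \<sigma> \<iota> b nb d F X = (\<lambda>r n k. \<Sum>i\<le>n. \<Sum>m<d.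
      zshift i (Lmul_LT \<sigma> \<iota> b nb (F i r m) ((tau_LT q \<sigma> \<iota> b nb ^^ i) (X m))) n k)"

end

theory Submission
  imports Defs
begin

text \<open>Let n be the z-adic order of x. Since the twist multiplies the \<open>\<tau>\<^sup>i\<close>-term of \<open>E\<^sub>a\<close>
by \<open>z\<^sup>i\<close>, the coefficient of \<open>z\<^sup>n\<close> in \<open>E~\<^sub>a(x)\<close> is \<open>E\<^sub>a\<^sub>,\<^sub>0\<close> applied to the coefficient
v of \<open>z\<^sup>n\<close> in x. Write \<open>E\<^sub>a\<^sub>,\<^sub>0 = a + N\<close> with N nilpotent; if \<open>E\<^sub>a\<^sub>,\<^sub>0 v = 0\<close> then
\<open>N v = -a v\<close>, so \<open>0 = N\<^sup>d v = (-a)\<^sup>d v\<close>, and v = 0 because a is invertible in \<open>K\<^sub>P\<close>.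
Neither the convergence of x nor the choice of P plays a role.\<close>

lemma ring_hom_fun_add: "ring_hom_fun f \<Longrightarrow> f (x + y) = f x + f y"
  unfolding ring_hom_fun_def by blast

lemma ring_hom_fun_mult: "ring_hom_fun f \<Longrightarrow> f (x * y) = f x * f y"
  unfolding ring_hom_fun_def by blast

lemma ring_hom_fun_1: "ring_hom_fun f \<Longrightarrow> f 1 = 1"
  unfolding ring_hom_fun_def by blast

lemma ring_hom_fun_0: "ring_hom_fun f \<Longrightarrow> f 0 = 0"
  using ring_hom_fun_add[of f 0 0] by simp

lemma ring_hom_fun_diff: "ring_hom_fun f \<Longrightarrow> f (x - y) = f x - f y"
  using ring_hom_fun_add[of f "x - y" y] by simp

lemma ring_hom_fun_sum: "ring_hom_fun f \<Longrightarrow> f (\<Sum>i\<in>S. g i) = (\<Sum>i\<in>S. f (g i))"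
  using sum_comp_morphism[of f g S] by (simp add: ring_hom_fun_0 ring_hom_fun_add comp_def)

lemma ring_hom_fun_eq_0_iff:
  fixes f :: "'a::field \<Rightarrow> 'b::field"
  assumes "ring_hom_fun f"
  shows "f x = 0 \<longleftrightarrow> x = 0"
proof
  assume "f x = 0"
  moreover have "x \<noteq> 0 \<Longrightarrow> f x * f (inverse x) = 1"
    using assms by (simp flip: ring_hom_fun_mult add: ring_hom_fun_1)
  ultimately show "x = 0" by auto
qed (simp add: assms ring_hom_fun_0)

lemma embA_eq_0_iff: "embA a = 0 \<longleftrightarrow> a = 0"
  unfolding embA_def by (simp add: Zero_fract_def eq_fract)

text \<open>The regular representation \<open>L \<rightarrow> M\<^sub>n\<^sub>b(K)\<close> in the basis b; \<^const>\<open>Lmul_LT\<close> is its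
action on \<open>L \<otimes>\<^sub>K T\<^sub>z(K\<^sub>P)\<close>.\<close>

definition mult_matrix ::
  "('a::field poly fract \<Rightarrow> 'l::field) \<Rightarrow> (nat \<Rightarrow> 'l) \<Rightarrow> nat \<Rightarrow> 'l \<Rightarrow> nat \<Rightarrow> nat \<Rightarrow> 'a poly fract"
  where "mult_matrix \<sigma> b nb l k j = coord \<sigma> b nb (l * b j) k"

text \<open>A \<open>d \<times> d\<close> matrix over L acting on \<open>(L \<otimes>\<^sub>K K\<^sub>P)\<^sup>d\<close>, with the same encoding of vectors as
a fixed z-coefficient of an element of \<^const>\<open>in_Tate_LP\<close>.\<close>

definition mat_act ::
  "('a::field poly fract \<Rightarrow> 'l::field) \<Rightarrow> ('a poly fract \<Rightarrow> 'kp::field) \<Rightarrow> (nat \<Rightarrow> 'l) \<Rightarrow> nat \<Rightarrow> nat \<Rightarrow>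
    (nat \<Rightarrow> nat \<Rightarrow> 'l) \<Rightarrow> (nat \<Rightarrow> nat \<Rightarrow> 'kp) \<Rightarrow> (nat \<Rightarrow> nat \<Rightarrow> 'kp)"
  where "mat_act \<sigma> \<iota> b nb d F v =
    (\<lambda>r k. \<Sum>m<d. \<Sum>j<nb. \<iota> (mult_matrix \<sigma> b nb (F r m) k j) * v m j)"

lemma mat_act_cong:
  "(\<And>m j. m < d \<Longrightarrow> j < nb \<Longrightarrow> v m j = v' m j) \<Longrightarrow> mat_act \<sigma> \<iota> b nb d F v = mat_act \<sigma> \<iota> b nb d F v'"
  unfolding mat_act_def by (intro ext sum.cong) auto

lemma mat_act_scale:
  "mat_act \<sigma> \<iota> b nb d F (\<lambda>m j. s * v m j) r k = s * mat_act \<sigma> \<iota> b nb d F v r k"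
  unfolding mat_act_def by (simp add: sum_distrib_left mult_ac)

context
  fixes \<sigma> :: "'a::field poly fract \<Rightarrow> 'l::field" and b :: "nat \<Rightarrow> 'l" and nb :: nat
  assumes hom: "ring_hom_fun \<sigma>" and basis: "is_basis \<sigma> b nb"
begin

lemma coord_sum: "l = (\<Sum>j<nb. \<sigma> (coord \<sigma> b nb l j) * b j)"
proof -
  have "\<exists>c. l = (\<Sum>j<nb. \<sigma> (c j) * b j)" using basis unfolding is_basis_def by blast
  then show ?thesis unfolding coord_def by (rule someI_ex)
qed

lemma coord_eqI:
  assumes l: "l = (\<Sum>j<nb. \<sigma> (c j) * b j)" and k: "k < nb"
  shows "coord \<sigma> b nb l k = c k"
proof -
  have indep: "(\<Sum>j<nb. \<sigma> (c' j) * b j) = 0 \<Longrightarrow> \<forall>j<nb. c' j = 0" for c'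
    using basis unfolding is_basis_def by blast
  have "(\<Sum>j<nb. \<sigma> (coord \<sigma> b nb l j - c j) * b j) = l - l"
    by (subst (2) coord_sum, subst (3) l)
       (simp add: ring_hom_fun_diff[OF hom] sum_subtractf left_diff_distrib)
  from indep[OF this[unfolded diff_self]] k show ?thesis by simp
qed

lemma mult_matrix_basis: "l * b j = (\<Sum>i<nb. \<sigma> (mult_matrix \<sigma> b nb l i j) * b i)"
  unfolding mult_matrix_def by (rule coord_sum)

lemma mult_matrix_add:
  assumes "k < nb"
  shows "mult_matrix \<sigma> b nb (l1 + l2) k j = mult_matrix \<sigma> b nb l1 k j + mult_matrix \<sigma> b nb l2 k j"
proof -
  have "(l1 + l2) * b j
      = (\<Sum>i<nb. \<sigma> (mult_matrix \<sigma> b nb l1 i j + mult_matrix \<sigma> b nb l2 i j) * b i)"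
    by (simp add: distrib_right mult_matrix_basis[of l1] mult_matrix_basis[of l2]
        ring_hom_fun_add[OF hom] sum.distrib)
  from coord_eqI[OF this assms] show ?thesis by (simp add: mult_matrix_def)
qed

lemma mult_matrix_0:
  assumes "k < nb"
  shows "mult_matrix \<sigma> b nb 0 k j = 0"
proof -
  have "0 * b j = (\<Sum>i<nb. \<sigma> 0 * b i)" by (simp add: ring_hom_fun_0[OF hom])
  from coord_eqI[OF this assms] show ?thesis by (simp add: mult_matrix_def)
qed

lemma mult_matrix_sum:
  assumes "k < nb"
  shows "mult_matrix \<sigma> b nb (\<Sum>s\<in>S. g s) k j = (\<Sum>s\<in>S. mult_matrix \<sigma> b nb (g s) k j)"
  using sum_comp_morphism[of "\<lambda>l. mult_matrix \<sigma> b nb l k j" g S]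
  by (simp add: mult_matrix_0 mult_matrix_add assms comp_def)

lemma mult_matrix_mult:
  assumes "k < nb"
  shows "mult_matrix \<sigma> b nb (l1 * l2) k i
    = (\<Sum>j<nb. mult_matrix \<sigma> b nb l1 k j * mult_matrix \<sigma> b nb l2 j i)"
proof -
  let ?M = "mult_matrix \<sigma> b nb"
  have "l1 * l2 * b i = l1 * (\<Sum>j<nb. \<sigma> (?M l2 j i) * b j)"
    by (simp flip: mult_matrix_basis add: mult.assoc)
  also have "\<dots> = (\<Sum>j<nb. \<sigma> (?M l2 j i) * (l1 * b j))"
    by (simp add: sum_distrib_left mult_ac)
  also have "\<dots> = (\<Sum>j<nb. \<Sum>k<nb. \<sigma> (?M l1 k j * ?M l2 j i) * b k)"
    by (simp add: mult_matrix_basis[of l1] sum_distrib_left ring_hom_fun_mult[OF hom] mult_ac)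
  also have "\<dots> = (\<Sum>k<nb. \<sigma> (\<Sum>j<nb. ?M l1 k j * ?M l2 j i) * b k)"
    by (subst sum.swap) (simp add: ring_hom_fun_sum[OF hom] sum_distrib_right)
  finally show ?thesis using coord_eqI[OF _ assms] by (simp add: mult_matrix_def)
qed

lemma mult_matrix_of:
  assumes "k < nb" and "i < nb"
  shows "mult_matrix \<sigma> b nb (\<sigma> x) k i = (if k = i then x else 0)"
proof -
  have "(\<Sum>j<nb. \<sigma> (if j = i then x else 0) * b j) = (\<Sum>j<nb. if j = i then \<sigma> x * b j else 0)"
    by (rule sum.cong) (simp_all add: ring_hom_fun_0[OF hom])
  then have "\<sigma> x * b i = (\<Sum>j<nb. \<sigma> (if j = i then x else 0) * b j)"
    using assms(2) by simp
  from coord_eqI[OF this assms(1)] show ?thesis by (simp add: mult_matrix_def)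
qed

context
  fixes \<iota> :: "'a poly fract \<Rightarrow> 'kp::field"
  assumes hom_\<iota>: "ring_hom_fun \<iota>"
begin

lemma mat_act_zero:
  assumes "k < nb"
  shows "mat_act \<sigma> \<iota> b nb d (\<lambda>_ _. 0) v r k = 0"
  unfolding mat_act_def by (simp add: mult_matrix_0 assms ring_hom_fun_0[OF hom_\<iota>])

lemma mat_act_add:
  assumes "k < nb"
  shows "mat_act \<sigma> \<iota> b nb d (\<lambda>r c. F r c + G r c) v r k
    = mat_act \<sigma> \<iota> b nb d F v r k + mat_act \<sigma> \<iota> b nb d G v r k"
  unfolding mat_act_def
  by (simp add: mult_matrix_add assms ring_hom_fun_add[OF hom_\<iota>] distrib_right sum.distrib)

lemma mat_act_scalar:
  assumes "k < nb" and "r < d"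
  shows "mat_act \<sigma> \<iota> b nb d (\<lambda>r c. if r = c \<and> r < d then \<sigma> x else 0) v r k = \<iota> x * v r k"
proof -
  have "mat_act \<sigma> \<iota> b nb d (\<lambda>r c. if r = c \<and> r < d then \<sigma> x else 0) v r k
      = (\<Sum>m<d. if m = r then \<Sum>j<nb. \<iota> (mult_matrix \<sigma> b nb (\<sigma> x) k j) * v m j else 0)"
    unfolding mat_act_def using assms
    by (intro sum.cong) (auto simp: mult_matrix_0 ring_hom_fun_0[OF hom_\<iota>])
  also have "\<dots> = (\<Sum>j<nb. \<iota> (mult_matrix \<sigma> b nb (\<sigma> x) k j) * v r j)"
    using assms(2) by simp
  also have "\<dots> = (\<Sum>j<nb. if j = k then \<iota> x * v r k else 0)"
    using assms(1) by (intro sum.cong) (auto simp: mult_matrix_of ring_hom_fun_0[OF hom_\<iota>])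
  also have "\<dots> = \<iota> x * v r k"
    using assms(1) by simp
  finally show ?thesis .
qed

lemma mat_act_mat_mul:
  assumes "k < nb"
  shows "mat_act \<sigma> \<iota> b nb d F (mat_act \<sigma> \<iota> b nb d G v) r k = mat_act \<sigma> \<iota> b nb d (mat_mul d F G) v r k"
proof -
  let ?C = "\<lambda>l k j. \<iota> (mult_matrix \<sigma> b nb l k j)"
  have "mat_act \<sigma> \<iota> b nb d F (mat_act \<sigma> \<iota> b nb d G v) r k
      = (\<Sum>m<d. \<Sum>j<nb. \<Sum>m'<d. \<Sum>j'<nb. ?C (F r m) k j * ?C (G m m') j j' * v m' j')"
    unfolding mat_act_def by (simp add: sum_distrib_left mult_ac)
  also have "\<dots> = (\<Sum>m'<d. \<Sum>j'<nb. \<Sum>m<d. \<Sum>j<nb. ?C (F r m) k j * ?C (G m m') j j' * v m' j')"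
    by (subst (2) sum.swap, subst sum.swap, subst (3) sum.swap, subst (2) sum.swap) (rule refl)
  also have "\<dots> = mat_act \<sigma> \<iota> b nb d (mat_mul d F G) v r k"
    unfolding mat_act_def mat_mul_def
    by (simp add: mult_matrix_sum mult_matrix_mult assms ring_hom_fun_sum[OF hom_\<iota>]
        ring_hom_fun_mult[OF hom_\<iota>] sum_distrib_left sum_distrib_right mult_ac)
  finally show ?thesis .
qed

lemma mat_act_mat_pow_eigen:
  assumes eigen: "\<And>r k. r < d \<Longrightarrow> k < nb \<Longrightarrow> mat_act \<sigma> \<iota> b nb d N v r k = s * v r k"
    and "r < d" and "k < nb"
  shows "mat_act \<sigma> \<iota> b nb d (mat_pow d N i) v r k = s ^ i * v r k"
  using assms(2,3)
proof (induction i arbitrary: r k)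
  case 0
  have "mat_pow d N 0 = (\<lambda>r c. if r = c \<and> r < d then \<sigma> 1 else 0)"
    unfolding mat_pow_def funpow_0 ring_hom_fun_1[OF hom] by (rule refl)
  with 0 show ?case by (simp add: mat_act_scalar ring_hom_fun_1[OF hom_\<iota>])
next
  case (Suc i)
  have "mat_act \<sigma> \<iota> b nb d (mat_pow d N (Suc i)) v r k
      = mat_act \<sigma> \<iota> b nb d N (mat_act \<sigma> \<iota> b nb d (mat_pow d N i) v) r k"
    by (simp add: mat_pow_def mat_act_mat_mul Suc.prems)
  also have "\<dots> = mat_act \<sigma> \<iota> b nb d N (\<lambda>m j. s ^ i * v m j) r k"
    by (subst mat_act_cong[where v' = "\<lambda>m j. s ^ i * v m j"]) (simp_all add: Suc.IH)
  also have "\<dots> = s ^ Suc i * v r k"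
    by (simp add: mat_act_scale eigen Suc.prems)
  finally show ?case .
qed

lemma scalar_plus_nilpotent_kernel_eq_0:
  assumes nilpotent: "mat_pow d (\<lambda>r c. F r c - (if r = c \<and> r < d then \<sigma> x else 0)) e = (\<lambda>_ _. 0)"
    and "x \<noteq> 0"
    and kernel: "\<And>r k. r < d \<Longrightarrow> k < nb \<Longrightarrow> mat_act \<sigma> \<iota> b nb d F v r k = 0"
    and "m < d" and "j < nb"
  shows "v m j = 0"
proof -
  define D where "D = (\<lambda>r c. if r = c \<and> r < d then \<sigma> x else 0)"
  define N where "N = (\<lambda>r c. F r c - D r c)"
  have "mat_act \<sigma> \<iota> b nb d N v r k = - \<iota> x * v r k" if "r < d" and "k < nb" for r k
  proof -
    have "mat_act \<sigma> \<iota> b nb d F v r k = mat_act \<sigma> \<iota> b nb d N v r k + mat_act \<sigma> \<iota> b nb d D v r k"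
      using mat_act_add[OF that(2), of d N D v r] by (simp add: N_def)
    then have "mat_act \<sigma> \<iota> b nb d N v r k + \<iota> x * v r k = 0"
      using kernel[OF that] mat_act_scalar[OF that(2,1)] by (simp add: D_def)
    then show ?thesis by (simp add: eq_neg_iff_add_eq_0)
  qed
  then have "mat_act \<sigma> \<iota> b nb d (mat_pow d N e) v m j = (- \<iota> x) ^ e * v m j"
    using mat_act_mat_pow_eigen assms(4,5) by simp
  moreover have "mat_act \<sigma> \<iota> b nb d (mat_pow d N e) v m j = 0"
    using nilpotent assms(5) by (simp add: N_def D_def mat_act_zero)
  moreover have "\<iota> x \<noteq> 0" using \<open>x \<noteq> 0\<close> ring_hom_fun_eq_0_iff[OF hom_\<iota>] by simp
  ultimately show ?thesis by simp
qed

end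

end

lemma tau_LT_funpow_eq_0:
  assumes "q > 0" and "\<forall>j<nb. Y n j = 0"
  shows "\<forall>k<nb. (tau_LT q \<sigma> \<iota> b nb ^^ i) Y n k = 0"
  by (induction i) (simp_all add: assms tau_LT_def zero_power)

lemma ztwist_lowest_coeff:
  assumes "q > 0" and below: "\<And>n m j. n < n0 \<Longrightarrow> m < d \<Longrightarrow> j < nb \<Longrightarrow> X m n j = 0"
  shows "ztwist q \<sigma> \<iota> b nb d F X r n0 k = mat_act \<sigma> \<iota> b nb d (F 0) (\<lambda>m j. X m n0 j) r k"
proof -
  define g where "g i = (\<Sum>m<d.
    zshift i (Lmul_LT \<sigma> \<iota> b nb (F i r m) ((tau_LT q \<sigma> \<iota> b nb ^^ i) (X m))) n0 k)" for i
  have "g i = 0" if "i \<in> {..n0} - {0}" for i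
  proof -
    from that have "n0 - i < n0" and "i \<le> n0" by auto
    then have "(tau_LT q \<sigma> \<iota> b nb ^^ i) (X m) (n0 - i) j = 0" if "m < d" and "j < nb" for m j
      using tau_LT_funpow_eq_0[OF assms(1)] below that by blast
    with \<open>i \<le> n0\<close> show ?thesis
      unfolding g_def zshift_def Lmul_LT_def by (auto intro!: sum.neutral)
  qed
  then have "ztwist q \<sigma> \<iota> b nb d F X r n0 k = g 0"
    unfolding ztwist_def g_def[symmetric] by (simp add: sum.remove[of "{..n0}" 0])
  then show ?thesis
    by (simp add: g_def zshift_def Lmul_LT_def mat_act_def mult_matrix_def)
qed

theorem mainTheorem20:
  fixes \<sigma> :: "'a::{finite,field} poly fract \<Rightarrow> 'l::field"
    and \<iota> :: "'a poly fract \<Rightarrow> 'kp::field"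
    and w :: "'kp \<Rightarrow> int"
    and b :: "nat \<Rightarrow> 'l" and nb d :: nat
    and E :: "'a poly \<Rightarrow> 'l twpoly"
    and P a :: "'a poly"
    and X :: "nat \<Rightarrow> nat \<Rightarrow> nat \<Rightarrow> 'kp"
  assumes "ring_hom_fun \<sigma>"
    and "is_basis \<sigma> b nb"
    and "anderson_t_module \<sigma> d E"
    and "lead_coeff P = 1" and "irreducible P"
    and "is_P_adic_completion P \<iota> w"
    and "a \<noteq> 0"
    and "in_Tate_LP w d nb X"
    and "\<exists>r<d. \<exists>n. \<exists>k<nb. X r n k \<noteq> 0"
  shows "\<exists>r<d. \<exists>n. \<exists>k<nb. ztwist CARD('a) \<sigma> \<iota> b nb d (E a) X r n k \<noteq> 0"
proof (rule ccontr)
  assume twist_0: "\<not> ?thesis"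
  have hom_\<iota>: "ring_hom_fun \<iota>" using assms(6) unfolding is_P_adic_completion_def by blast
  define n0 where "n0 = (LEAST n. \<exists>r<d. \<exists>k<nb. X r n k \<noteq> 0)"
  have "\<exists>n. \<exists>r<d. \<exists>k<nb. X r n k \<noteq> 0" using assms(9) by blast
  then have lowest: "\<exists>r<d. \<exists>k<nb. X r n0 k \<noteq> 0"
    unfolding n0_def by (rule LeastI_ex)
  have below: "X m n j = 0" if "n < n0" and "m < d" and "j < nb" for n m j
    using not_less_Least[OF that(1)[unfolded n0_def]] that(2,3) by blast
  have kernel: "mat_act \<sigma> \<iota> b nb d (E a 0) (\<lambda>m j. X m n0 j) r k = 0" if "r < d" and "k < nb" for r k
  proof -
    have "mat_act \<sigma> \<iota> b nb d (E a 0) (\<lambda>m j. X m n0 j) r k = ztwist CARD('a) \<sigma> \<iota> b nb d (E a) X r n0 k"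
      by (rule ztwist_lowest_coeff[symmetric]) (simp_all add: below)
    also have "\<dots> = 0" using twist_0 that by blast
    finally show ?thesis .
  qed
  have nilpotent: "mat_pow d (\<lambda>r c. E a 0 r c - (if r = c \<and> r < d then \<sigma> (embA a) else 0)) d
      = (\<lambda>_ _. 0)"
    using assms(3) unfolding anderson_t_module_def by blast
  have "embA a \<noteq> 0" using assms(7) by (simp add: embA_eq_0_iff)
  with lowest show False
    using scalar_plus_nilpotent_kernel_eq_0[OF assms(1,2) hom_\<iota> nilpotent _ kernel] by blast
qed

end
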